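(* Assume the problem is a quadratic program: there are constant matrices $H\in\mathbb{R}^{n\times n}$, $A_{\mathcal I}\in\mathbb{R}^{m_{\mathcal I}\times n}$, $A_{\mathcal E}\in\mathbb{R}^{m_{\mathcal E}\times n}$ with $H(x,\lambda)\equiv H$, $A_{\mathcal I}(x)\equiv A_{\mathcal I}$, $A_{\mathcal E}(x)\equiv A_{\mathcal E}$. In the setting of the context (with the sequences $\{\mu_k\}$, $\{w_k\}$, subsequence $\mathcal K$), for all $k\in\mathcal K$ sufficiently large and all $q\ge1$, $$J_F(w_{k+1})\,\hat w^{w^*,q+1}_{k+1}=-\sum_{i=1}^q\binom{q+1}{i}\begin{pmatrix}0\\ \bigl[\hat\Lambda^{w^*,q+1-i}_{k+1}\bigr]_{\mathcal I}A_{\mathcal I}\hat x^{w^*,i}_{k+1}\\ 0\end{pmatrix}.$$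
   Context: Problem: minimize $f(x)$ subject to $c_{\mathcal I}(x)\ge0$, $c_{\mathcal E}(x)=0$, $f,c_i\colon\mathbb{R}^n\to\mathbb{R}$, $c=(c_{\mathcal I}^T,c_{\mathcal E}^T)^T\in\mathbb{R}^m$, $m=m_{\mathcal I}+m_{\mathcal E}$. Notation: $g=\nabla f$, $A$ the Jacobian of $c$, $H(x,\lambda)$ the Hessian in $x$ of $f(x)-\lambda^Tc(x)$, $[\cdot]_S$ rows indexed by $S$, uppercase = diagonal matrix of the lowercase vector (so $\hat\Lambda=\mathrm{diag}(\hat\lambda)$), $e$ the all-ones vector, $w=(x,\lambda)$ with superscripts/subscripts applying to both parts. $F^\mu(x,\lambda)=\bigl(g(x)-A(x)^T\lambda;\ C_{\mathcal I}(x)[\lambda]_{\mathcal I}-\mu e;\ c_{\mathcal E}(x)\bigr)$ with Jacobian $J_F$ in $w$. Let $x^*$ be a KKT point at which LICQ, strict complementarity (multiplier $\lambda^*$ with $[\lambda^*]_i>0$ for active inequality indices) and strong second-order sufficiency ($p^TH(x^*,\lambda^* )p\ge\omega\|p\|^2$, $\omega>0$, for all $p$ orthogonal to all active constraint gradients) hold; $w^*=(x^*,\lambda^* )$. Let $w^{w^*,0}$ be the locally unique smooth function near $0$ with $F^0(w^{w^*,0}(r))=r$, $w^{w^*,0}(0)=w^*$; with $\mathrm{nml}(r)=r/\|r\|$ ($r\ne0$), $\mathrm{nml}(0)=0$, let $w^{w^*,\mu,r}(\rho)=w^{w^*,0}(\rho\,\mathrm{nml}(r)+(0,\mu e^T,0)^T)$.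 Let $\{\mu_k\}$ be strictly decreasing positive, $\{w_k\}$ with $\|F^{\mu_k}(w_{k+1})\|\le\epsilon(\mu_k)$, $\epsilon(\mu)=\Theta(\mu)$ positive, and $w_{k+1}\to w^*$ along a subsequence $\mathcal K$. Set $r_{k+1}=F^{\mu_{k+1}}(w_{k+1})$ and for $q\ge1$ $$\hat w^{w^*,q}_{k+1}=\frac{d^q w^{w^*,\mu_{k+1},r_{k+1}}(\rho)}{d\rho^q}\Big|_{\rho=\|r_{k+1}\|}\cdot(-\|r_{k+1}\|)^q.$$ *)

theory Defs
  imports "HOL-Analysis.Analysis" "HOL-Library.Landau_Symbols"
begin

text \<open>Quadratic program data: objective f(x) = 1/2 x'Hx + d'x (+ const), so g(x) = Hx + d;
  constraints c(x) = A x + b with index type 'm; the inequality indices are the set I,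
  the equality indices are the complement UNIV - I.\<close>

definition qp_c :: "real^'n^'m \<Rightarrow> real^'m \<Rightarrow> real^'n \<Rightarrow> real^'m" where
  "qp_c A b x = A *v x + b"

definition qp_g :: "real^'n^'n \<Rightarrow> real^'n \<Rightarrow> real^'n \<Rightarrow> real^'n" where
  "qp_g H d x = H *v x + d"

text \<open>The map F^mu(x,lambda) = (g(x) - A' lambda ; C_I(x) lambda_I - mu e ; c_E(x)),
  with the inequality and equality components stored in the positions of their indices.\<close>
definition qpF :: "real^'n^'n \<Rightarrow> real^'n \<Rightarrow> real^'n^'m \<Rightarrow> real^'m \<Rightarrow> 'm set \<Rightarrow> real
    \<Rightarrow> ((real^'n) \<times> (real^'m)) \<Rightarrow> ((real^'n) \<times> (real^'m))" where
  "qpF H d A b I \<mu> w =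
     (qp_g H d (fst w) - transpose A *v snd w,
      \<chi> j. if j \<in> I then qp_c A b (fst w) $ j * snd w $ j - \<mu> else qp_c A b (fst w) $ j)"

definition ehat :: "'m set \<Rightarrow> (real^'n) \<times> (real^'m)" where
  "ehat I = (0, \<chi> j. if j \<in> I then 1 else 0)"

definition active_set :: "real^'n^'m \<Rightarrow> real^'m \<Rightarrow> 'm set \<Rightarrow> real^'n \<Rightarrow> 'm set" where
  "active_set A b I x = {i \<in> I. qp_c A b x $ i = 0} \<union> (UNIV - I)"

definition nml :: "'a::real_normed_vector \<Rightarrow> 'a" where
  "nml r = (if r = 0 then 0 else r /\<^sub>R norm r)"

text \<open>C-infinity smoothness on a set U: there is a family D x [h1,...,hk] of all iterated
  (directional) Frechet derivatives, each differentiable at every point of U.\<close>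
definition smooth_on :: "'a::real_normed_vector set \<Rightarrow> ('a \<Rightarrow> 'b::real_normed_vector) \<Rightarrow> bool" where
  "smooth_on U f \<longleftrightarrow> (\<exists>D :: 'a \<Rightarrow> 'a list \<Rightarrow> 'b.
      (\<forall>x\<in>U. D x [] = f x) \<and>
      (\<forall>x\<in>U. \<forall>hs. ((\<lambda>y. D y hs) has_derivative (\<lambda>h. D x (h # hs))) (at x)))"

primrec higher_vderiv :: "nat \<Rightarrow> (real \<Rightarrow> 'a::real_normed_vector) \<Rightarrow> real \<Rightarrow> 'a" where
  "higher_vderiv 0 \<phi> = \<phi>"
| "higher_vderiv (Suc q) \<phi> = (\<lambda>t. vector_derivative (higher_vderiv q \<phi>) (at t))"

text \<open>w^{w*,mu,r}(rho) = w^{w*,0}(rho nml(r) + (0, mu e, 0)), where W = w^{w*,0}.\<close>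
definition wpath :: "(((real^'n) \<times> (real^'m)) \<Rightarrow> ((real^'n) \<times> (real^'m))) \<Rightarrow> 'm set \<Rightarrow> real
    \<Rightarrow> ((real^'n) \<times> (real^'m)) \<Rightarrow> real \<Rightarrow> ((real^'n) \<times> (real^'m))" where
  "wpath W I \<mu> r \<rho> = W (\<rho> *\<^sub>R nml r + \<mu> *\<^sub>R ehat I)"

definition what :: "(((real^'n) \<times> (real^'m)) \<Rightarrow> ((real^'n) \<times> (real^'m))) \<Rightarrow> 'm set \<Rightarrow> real
    \<Rightarrow> ((real^'n) \<times> (real^'m)) \<Rightarrow> nat \<Rightarrow> ((real^'n) \<times> (real^'m))" where
  "what W I \<mu> r q = (- norm r) ^ q *\<^sub>R higher_vderiv q (wpath W I \<mu> r) (norm r)"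

end

theory Submission imports Defs begin

(* For a quadratic program F^mu is a quadratic map, F^mu(w) = L w + B(w,w) + c - mu (0,e,0) with
   L linear and B bilinear, so J_F(w) h = L h + B(w,h) + B(h,w).  Along the line
   rho |-> rho nml(r) + mu (0,e,0) the path psi(rho) = w^{w*,0}(rho nml(r) + mu (0,e,0)) satisfies
   L psi + B(psi,psi) = rho nml(r) + const; differentiating q+1 >= 2 times by the Leibniz rule
   kills the right-hand side and gives the identity at every point of the path, and it is
   homogeneous of degree q+1 under scaling the j-th derivative by (-|r|)^j.
   It remains to see that w_{k+1} lies on the path, i.e. w^{w*,0}(F^0(w_{k+1})) = w_{k+1} for large
   k in K: the derivative of the right inverse w^{w*,0} at 0 inverts J_F at w*, which makes the
   quadratic map F^0 injective near w*.  Hence KKT, LICQ, strict complementarity and second-order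
   sufficiency enter only through the existence of w^{w*,0}, and of the conditions on mu_k,
   epsilon and w_k only the convergence of w_{k+1} to w* along K is needed. *)

lemma sum_choose_Suc_scaleR:
  fixes a :: "nat \<Rightarrow> nat \<Rightarrow> 'v::real_vector"
  shows "(\<Sum>i\<le>m. real (m choose i) *\<^sub>R (a (Suc i) (m - i) + a i (Suc m - i)))
       = (\<Sum>i\<le>Suc m. real (Suc m choose i) *\<^sub>R a i (Suc m - i))"
proof -
  have r: "(\<Sum>i\<le>Suc m. real (Suc m choose i) *\<^sub>R a i (Suc m - i))
     = a 0 (Suc m) + (\<Sum>i\<le>m. real (m choose i) *\<^sub>R a (Suc i) (m - i))
        + (\<Sum>i\<le>m. real (m choose Suc i) *\<^sub>R a (Suc i) (m - i))"
    by (simp add: sum.atMost_Suc_shift scaleR_add_left sum.distrib del: sum.atMost_Suc)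
  have "(\<Sum>i\<le>m. real (m choose i) *\<^sub>R a i (Suc m - i))
     = (\<Sum>i\<le>Suc m. real (m choose i) *\<^sub>R a i (Suc m - i))"
    by simp
  also have "\<dots> = a 0 (Suc m) + (\<Sum>i\<le>m. real (m choose Suc i) *\<^sub>R a (Suc i) (m - i))"
    by (simp add: sum.atMost_Suc_shift del: sum.atMost_Suc)
  finally show ?thesis using r by (simp add: scaleR_add_right sum.distrib)
qed

lemma bounded_bilinear_leibniz_has_vector_derivative:
  fixes B :: "'v::real_normed_vector \<Rightarrow> 'v \<Rightarrow> 'w::real_normed_vector"
  assumes B: "bounded_bilinear B" and der: "\<And>j. (\<psi> j has_vector_derivative \<psi> (Suc j) \<rho>) (at \<rho>)"
  shows "((\<lambda>\<rho>. \<Sum>i\<le>m. real (m choose i) *\<^sub>R B (\<psi> i \<rho>) (\<psi> (m - i) \<rho>)) has_vector_derivative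
           (\<Sum>i\<le>Suc m. real (Suc m choose i) *\<^sub>R B (\<psi> i \<rho>) (\<psi> (Suc m - i) \<rho>))) (at \<rho>)"
proof -
  have "((\<lambda>\<rho>. \<Sum>i\<le>m. real (m choose i) *\<^sub>R B (\<psi> i \<rho>) (\<psi> (m - i) \<rho>)) has_vector_derivative
      (\<Sum>i\<le>m. real (m choose i) *\<^sub>R
         (B (\<psi> i \<rho>) (\<psi> (Suc (m - i)) \<rho>) + B (\<psi> (Suc i) \<rho>) (\<psi> (m - i) \<rho>)))) (at \<rho>)"
    by (intro has_vector_derivative_sum bounded_bilinear.has_vector_derivative[OF B]
        bounded_linear.has_vector_derivative[OF bounded_linear_scaleR_right] der)
  moreover have "(\<Sum>i\<le>m. real (m choose i) *\<^sub>R
         (B (\<psi> i \<rho>) (\<psi> (Suc (m - i)) \<rho>) + B (\<psi> (Suc i) \<rho>) (\<psi> (m - i) \<rho>)))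
      = (\<Sum>i\<le>Suc m. real (Suc m choose i) *\<^sub>R B (\<psi> i \<rho>) (\<psi> (Suc m - i) \<rho>))"
    using sum_choose_Suc_scaleR[of m "\<lambda>i j. B (\<psi> i \<rho>) (\<psi> j \<rho>)"]
    by (simp add: Suc_diff_le add.commute)
  ultimately show ?thesis by simp
qed

lemma has_vector_derivative_unique_on_open:
  assumes "(f has_vector_derivative f') (at x)" "(g has_vector_derivative g') (at x)"
    and "open S" "x \<in> S" "\<And>y. y \<in> S \<Longrightarrow> f y = g y"
  shows "f' = g'"
proof -
  have "(g has_vector_derivative f') (at x)"
    using has_vector_derivative_transform_within_open assms by metis
  then show ?thesis using assms(2) vector_derivative_unique_at by blast
qed

lemma higher_derivatives_of_affine_vanish:
  fixes \<phi> :: "nat \<Rightarrow> real \<Rightarrow> 'v::real_normed_vector"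
  assumes S: "open S" "\<rho> \<in> S"
    and der: "\<And>j \<rho>. \<rho> \<in> S \<Longrightarrow> (\<phi> j has_vector_derivative \<phi> (Suc j) \<rho>) (at \<rho>)"
    and affine: "\<And>\<rho>. \<rho> \<in> S \<Longrightarrow> \<phi> 0 \<rho> = \<rho> *\<^sub>R n + c"
  shows "\<phi> (Suc (Suc j)) \<rho> = 0"
  using S(2)
proof (induction j arbitrary: \<rho>)
  case 0
  have "\<phi> (Suc 0) \<rho> = n" if "\<rho> \<in> S" for \<rho>
    by (rule has_vector_derivative_unique_on_open[OF der[OF that] _ S(1) that affine])
       (auto intro!: derivative_eq_intros)
  then show ?case
    by (intro has_vector_derivative_unique_on_open[OF der[OF "0.prems", of "Suc 0"] _ S(1) "0.prems"])
       auto
next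
  case (Suc j)
  then show ?case
    by (intro has_vector_derivative_unique_on_open[OF der[OF Suc.prems, of "Suc (Suc j)"] _ S(1)
          Suc.prems])
       auto
qed

lemma bilinear_affine_identity_higher_derivatives:
  fixes L :: "'v::real_normed_vector \<Rightarrow> 'w::real_normed_vector" and B :: "'v \<Rightarrow> 'v \<Rightarrow> 'w"
    and \<psi> :: "nat \<Rightarrow> real \<Rightarrow> 'v"
  assumes L: "bounded_linear L" and B: "bounded_bilinear B"
    and S: "open S" "\<rho>0 \<in> S"
    and der: "\<And>j \<rho>. \<rho> \<in> S \<Longrightarrow> (\<psi> j has_vector_derivative \<psi> (Suc j) \<rho>) (at \<rho>)"
    and affine: "\<And>\<rho>. \<rho> \<in> S \<Longrightarrow> L (\<psi> 0 \<rho>) + B (\<psi> 0 \<rho>) (\<psi> 0 \<rho>) = \<rho> *\<^sub>R n + c"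
    and q: "q \<ge> 1"
  shows "L (\<psi> (q + 1) \<rho>0) + B (\<psi> 0 \<rho>0) (\<psi> (q + 1) \<rho>0) + B (\<psi> (q + 1) \<rho>0) (\<psi> 0 \<rho>0)
       = - (\<Sum>i = 1..q. real ((q + 1) choose i) *\<^sub>R B (\<psi> i \<rho>0) (\<psi> (q + 1 - i) \<rho>0))"
proof -
  define Q where "Q m \<rho> = L (\<psi> m \<rho>) + (\<Sum>i\<le>m. real (m choose i) *\<^sub>R B (\<psi> i \<rho>) (\<psi> (m - i) \<rho>))"
    for m \<rho>
  have "(Q m has_vector_derivative Q (Suc m) \<rho>) (at \<rho>)" if "\<rho> \<in> S" for m \<rho>
    unfolding Q_def
    by (intro has_vector_derivative_add bounded_linear.has_vector_derivative[OF L] der that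
        bounded_bilinear_leibniz_has_vector_derivative[OF B])
  moreover have "Q 0 \<rho> = \<rho> *\<^sub>R n + c" if "\<rho> \<in> S" for \<rho>
    using affine[OF that] by (simp add: Q_def)
  ultimately have "Q (q + 1) \<rho>0 = 0"
    using higher_derivatives_of_affine_vanish[OF S, of Q n c "q - 1"] q by simp
  moreover have "(\<Sum>i\<le>q + 1. real ((q + 1) choose i) *\<^sub>R B (\<psi> i \<rho>0) (\<psi> (q + 1 - i) \<rho>0))
      = B (\<psi> 0 \<rho>0) (\<psi> (q + 1) \<rho>0) + B (\<psi> (q + 1) \<rho>0) (\<psi> 0 \<rho>0)
        + (\<Sum>i = 1..q. real ((q + 1) choose i) *\<^sub>R B (\<psi> i \<rho>0) (\<psi> (q + 1 - i) \<rho>0))"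
  proof -
    have "{..q + 1} = insert 0 (insert (q + 1) {1..q})" by auto
    then show ?thesis by (simp add: algebra_simps)
  qed
  ultimately show ?thesis unfolding Q_def by (simp add: algebra_simps eq_neg_iff_add_eq_0)
qed

lemma bounded_bilinear_scaleR_power_choose_sum:
  fixes B :: "'v::real_normed_vector \<Rightarrow> 'v \<Rightarrow> 'w::real_normed_vector"
  assumes B: "bounded_bilinear B"
  shows "a ^ (q + 1) *\<^sub>R (\<Sum>i = 1..q. real ((q + 1) choose i) *\<^sub>R B (x i) (x (q + 1 - i)))
     = (\<Sum>i = 1..q. real ((q + 1) choose i) *\<^sub>R B (a ^ i *\<^sub>R x i) (a ^ (q + 1 - i) *\<^sub>R x (q + 1 - i)))"
  unfolding scaleR_sum_right
proof (rule sum.cong[OF refl])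
  fix i assume "i \<in> {1..q}"
  then have "a ^ (q + 1) = a ^ i * a ^ (q + 1 - i)" by (simp flip: power_add)
  then show "a ^ (q + 1) *\<^sub>R (real ((q + 1) choose i) *\<^sub>R B (x i) (x (q + 1 - i)))
      = real ((q + 1) choose i) *\<^sub>R B (a ^ i *\<^sub>R x i) (a ^ (q + 1 - i) *\<^sub>R x (q + 1 - i))"
    by (simp add: bounded_bilinear.scaleR_right[OF B] bounded_bilinear.scaleR_left[OF B])
qed

lemma higher_vderiv_eq_on_open:
  assumes "open S" "\<rho> \<in> S"
    and "\<And>\<rho>. \<rho> \<in> S \<Longrightarrow> f \<rho> = \<psi> 0 \<rho>"
    and "\<And>j \<rho>. \<rho> \<in> S \<Longrightarrow> (\<psi> j has_vector_derivative \<psi> (Suc j) \<rho>) (at \<rho>)"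
  shows "higher_vderiv j f \<rho> = \<psi> j \<rho>"
  using assms(2)
proof (induction j arbitrary: \<rho>)
  case 0
  then show ?case using assms(3) by simp
next
  case (Suc j)
  have "(higher_vderiv j f has_vector_derivative \<psi> (Suc j) \<rho>) (at \<rho>)"
    by (rule has_vector_derivative_transform_within_open[OF assms(4)[OF Suc.prems] assms(1) Suc.prems])
       (simp add: Suc.IH)
  then show ?case by (simp add: vector_derivative_at)
qed

lemma iterated_derivative_along_line:
  fixes D :: "'a::real_normed_vector \<Rightarrow> 'a list \<Rightarrow> 'b::real_normed_vector"
  assumes D: "\<forall>x\<in>U. \<forall>hs. ((\<lambda>y. D y hs) has_derivative (\<lambda>h. D x (h # hs))) (at x)"
    and U: "\<rho> *\<^sub>R n + c \<in> U"
  shows "((\<lambda>\<rho>. D (\<rho> *\<^sub>R n + c) (replicate j n)) has_vector_derivative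
           D (\<rho> *\<^sub>R n + c) (replicate (Suc j) n)) (at \<rho>)"
proof -
  have DU: "((\<lambda>y. D y (replicate j n)) has_derivative (\<lambda>h. D (\<rho> *\<^sub>R n + c) (h # replicate j n)))
      (at (\<rho> *\<^sub>R n + c))"
    using D U by blast
  have "((\<lambda>\<rho>. \<rho> *\<^sub>R n + c) has_derivative (\<lambda>t. t *\<^sub>R n)) (at \<rho>)"
    by (auto intro!: derivative_eq_intros)
  from has_derivative_compose[OF this DU]
  have "((\<lambda>\<rho>. D (\<rho> *\<^sub>R n + c) (replicate j n)) has_derivative
      (\<lambda>t. D (\<rho> *\<^sub>R n + c) ((t *\<^sub>R n) # replicate j n))) (at \<rho>)" .
  moreover have "D (\<rho> *\<^sub>R n + c) ((t *\<^sub>R n) # replicate j n) = t *\<^sub>R D (\<rho> *\<^sub>R n + c) (n # replicate j n)"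
    for t
    using linear_cmul[OF has_derivative_linear[OF DU]] .
  ultimately show ?thesis by (simp add: has_vector_derivative_def)
qed

lemma smooth_on_line_higher_vderiv:
  assumes "smooth_on U f" "open U" "\<rho> *\<^sub>R n + c \<in> U"
  shows "(higher_vderiv j (\<lambda>\<rho>. f (\<rho> *\<^sub>R n + c)) has_vector_derivative
           higher_vderiv (Suc j) (\<lambda>\<rho>. f (\<rho> *\<^sub>R n + c)) \<rho>) (at \<rho>)"
proof -
  obtain D where D0: "\<forall>x\<in>U. D x [] = f x"
    and D: "\<forall>x\<in>U. \<forall>hs. ((\<lambda>y. D y hs) has_derivative (\<lambda>h. D x (h # hs))) (at x)"
    using assms(1) unfolding smooth_on_def by blast
  define S where "S = (\<lambda>\<rho>. \<rho> *\<^sub>R n + c) -` U"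
  define \<psi> where "\<psi> j \<rho> = D (\<rho> *\<^sub>R n + c) (replicate j n)" for j \<rho>
  have S: "open S" "\<rho> \<in> S"
    unfolding S_def using assms(3) by (auto intro: continuous_open_vimage[OF assms(2)])
  have der: "(\<psi> j has_vector_derivative \<psi> (Suc j) \<rho>) (at \<rho>)" if "\<rho> \<in> S" for j \<rho>
    unfolding \<psi>_def by (rule iterated_derivative_along_line[OF D]) (use that S_def in simp)
  have eq: "higher_vderiv j (\<lambda>\<rho>. f (\<rho> *\<^sub>R n + c)) \<rho> = \<psi> j \<rho>" if "\<rho> \<in> S" for j \<rho>
    using higher_vderiv_eq_on_open[where \<psi> = \<psi>, OF S(1) that _ der] D0
    unfolding S_def \<psi>_def by simp
  have "(higher_vderiv j (\<lambda>\<rho>. f (\<rho> *\<^sub>R n + c)) has_vector_derivative \<psi> (Suc j) \<rho>) (at \<rho>)"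
    by (rule has_vector_derivative_transform_within_open[OF der[OF S(2)] S]) (simp add: eq)
  then show ?thesis using eq[OF S(2), of "Suc j"] by simp
qed

lemma smooth_on_differentiable:
  assumes "smooth_on U f" "open U" "x \<in> U"
  shows "f differentiable (at x)"
proof -
  obtain D where D0: "\<forall>x\<in>U. D x [] = f x"
    and D: "\<forall>x\<in>U. \<forall>hs. ((\<lambda>y. D y hs) has_derivative (\<lambda>h. D x (h # hs))) (at x)"
    using assms(1) unfolding smooth_on_def by blast
  have "(f has_derivative (\<lambda>h. D x [h])) (at x)"
    by (rule has_derivative_transform_within_open[OF _ assms(2,3), of "\<lambda>y. D y []"])
       (use D D0 assms(3) in auto)
  then show ?thesis unfolding differentiable_def by blast
qed

lemma derivative_of_right_inverse_inverts:
  fixes G W :: "'a::euclidean_space \<Rightarrow> 'a"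
  assumes W: "(W has_derivative W') (at s0)" and G: "(G has_derivative J) (at (W s0))"
    and U: "open U" "s0 \<in> U" and inv: "\<forall>s\<in>U. G (W s) = s"
  shows "W' (J h) = h"
proof -
  have "((G \<circ> W) has_derivative (J \<circ> W')) (at s0)"
    using diff_chain_at[OF W G] .
  moreover have "((G \<circ> W) has_derivative id) (at s0)"
    by (rule has_derivative_transform_within_open[OF has_derivative_id U]) (use inv in simp)
  ultimately have "J \<circ> W' = id" by (rule has_derivative_unique)
  then have "W' \<circ> J = id"
    using linear_inverse_left has_derivative_linear W G by blast
  then show ?thesis by (rule pointfree_idE)
qed

lemma quadratic_map_inj_on_ball:
  fixes L :: "'a::real_normed_vector \<Rightarrow> 'b::real_normed_vector"
  assumes L: "bounded_linear L" and B: "bounded_bilinear B" and M: "bounded_linear M"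
    and inverse: "\<And>h. M (L h + B u h + B h u) = h"
  shows "\<exists>\<eta>>0. inj_on (\<lambda>w. L w + B w w + c) (ball u \<eta>)"
proof -
  obtain K where K: "K > 0" "\<And>x. norm (M x) \<le> norm x * K"
    using bounded_linear.pos_bounded[OF M] by blast
  obtain KB where KB: "KB > 0" "\<And>x y. norm (B x y) \<le> norm x * norm y * KB"
    using bounded_bilinear.pos_bounded[OF B] by blast
  define \<eta> where "\<eta> = 1 / (4 * K * KB)"
  have "w1 = w2"
    if w1: "norm (w1 - u) < \<eta>" and w2: "norm (w2 - u) < \<eta>"
      and eq: "L w1 + B w1 w1 + c = L w2 + B w2 w2 + c" for w1 w2
  proof -
    define \<delta> where "\<delta> = w1 - w2"
    have key: "L \<delta> + B u \<delta> + B \<delta> u = - (B (w1 - u) \<delta> + B \<delta> (w2 - u))"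
      using eq unfolding \<delta>_def
      by (simp add: linear_diff[OF bounded_linear.linear[OF L]] bounded_bilinear.diff_left[OF B]
          bounded_bilinear.diff_right[OF B] algebra_simps)
    have "norm \<delta> \<le> norm (L \<delta> + B u \<delta> + B \<delta> u) * K"
      using K(2)[of "L \<delta> + B u \<delta> + B \<delta> u"] by (simp only: inverse)
    also have "\<dots> \<le> (norm (w1 - u) * norm \<delta> * KB + norm \<delta> * norm (w2 - u) * KB) * K"
      unfolding key norm_minus_cancel using K(1)
      by (intro mult_right_mono order_trans[OF norm_triangle_ineq add_mono] KB(2)) auto
    also have "\<dots> = (norm (w1 - u) + norm (w2 - u)) * (KB * K * norm \<delta>)"
      by (simp add: algebra_simps)
    also have "\<dots> \<le> (\<eta> + \<eta>) * (KB * K * norm \<delta>)"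
      using w1 w2 K(1) KB(1) by (intro mult_right_mono) auto
    also have "\<dots> = norm \<delta> / 2"
      unfolding \<eta>_def using K(1) KB(1) by (simp add: field_simps)
    finally show ?thesis unfolding \<delta>_def by simp
  qed
  moreover have "\<eta> > 0" unfolding \<eta>_def using K(1) KB(1) by simp
  ultimately show ?thesis by (auto simp: inj_on_def dist_norm norm_minus_commute)
qed

lemma eventually_right_inverse_is_left_inverse:
  assumes U: "open U" "s0 \<in> U" and inv: "\<forall>s\<in>U. G (W s) = s"
    and cont: "isCont W s0" "isCont G (W s0)"
    and V: "open V" "W s0 \<in> V" "inj_on G V"
  shows "\<forall>\<^sub>F v in nhds (W s0). G v \<in> U \<and> W (G v) = v"
proof -
  have G0: "G (W s0) = s0" using inv U(2) by simp
  have "(G \<longlongrightarrow> s0) (nhds (W s0))"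
    using cont(2) unfolding continuous_at tendsto_at_iff_tendsto_nhds by (simp add: G0)
  then have "\<forall>\<^sub>F v in nhds (W s0). G v \<in> U"
    using U by (rule topological_tendstoD)
  moreover have "((\<lambda>v. W (G v)) \<longlongrightarrow> W s0) (nhds (W s0))"
    using continuous_at_compose[OF cont(2), unfolded G0, OF cont(1)]
    unfolding continuous_at tendsto_at_iff_tendsto_nhds by (simp add: G0 o_def)
  then have "\<forall>\<^sub>F v in nhds (W s0). W (G v) \<in> V"
    using V(1,2) by (rule topological_tendstoD)
  moreover have "\<forall>\<^sub>F v in nhds (W s0). v \<in> V"
    using V(1,2) eventually_nhds by blast
  ultimately show ?thesis
    by eventually_elim (use inv V(3) in \<open>auto simp: inj_on_def\<close>)
qed

definition qp_lin :: "real^'n^'n \<Rightarrow> real^'n^'m \<Rightarrow> real^'m \<Rightarrow> 'm set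
    \<Rightarrow> (real^'n) \<times> (real^'m) \<Rightarrow> (real^'n) \<times> (real^'m)" where
  "qp_lin H A b I w =
     (H *v fst w - transpose A *v snd w, \<chi> l. if l \<in> I then b $ l * snd w $ l else (A *v fst w) $ l)"

definition qp_bil :: "real^'n^'m \<Rightarrow> 'm set
    \<Rightarrow> (real^'n) \<times> (real^'m) \<Rightarrow> (real^'n) \<times> (real^'m) \<Rightarrow> (real^'n) \<times> (real^'m)" where
  "qp_bil A I u v = (0, \<chi> l. if l \<in> I then snd v $ l * (A *v fst u) $ l else 0)"

definition qp_const :: "real^'n \<Rightarrow> real^'m \<Rightarrow> 'm set \<Rightarrow> (real^'n) \<times> (real^'m)" where
  "qp_const d b I = (d, \<chi> l. if l \<in> I then 0 else b $ l)"

lemma qpF_quadratic: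
  "qpF H d A b I \<mu> w = qp_lin H A b I w + qp_bil A I w w + qp_const d b I - \<mu> *\<^sub>R ehat I"
  by (auto simp: qpF_def qp_lin_def qp_bil_def qp_const_def ehat_def qp_g_def qp_c_def
      vec_eq_iff prod_eq_iff algebra_simps)

lemma bounded_linear_qp_lin: "bounded_linear (qp_lin H A b I)"
  unfolding linear_conv_bounded_linear[symmetric]
  by (rule linearI) (auto simp: qp_lin_def vec_eq_iff algebra_simps)

lemma bounded_bilinear_qp_bil: "bounded_bilinear (qp_bil A I)"
  unfolding bilinear_conv_bounded_bilinear[symmetric] bilinear_def
  by (auto intro!: linearI simp: qp_bil_def vec_eq_iff algebra_simps)

lemma qpF_has_derivative:
  "(qpF H d A b I \<mu> has_derivative
     (\<lambda>h. qp_lin H A b I h + qp_bil A I w h + qp_bil A I h w)) (at w)"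
proof -
  have "((\<lambda>w. qp_lin H A b I w + qp_bil A I w w + qp_const d b I - \<mu> *\<^sub>R ehat I) has_derivative
      (\<lambda>h. qp_lin H A b I h + (qp_bil A I w h + qp_bil A I h w) + 0 - 0)) (at w)"
    by (intro derivative_intros bounded_linear.has_derivative[OF bounded_linear_qp_lin]
        bounded_bilinear.FDERIV[OF bounded_bilinear_qp_bil] has_derivative_ident)
  then show ?thesis by (simp add: qpF_quadratic[abs_def] algebra_simps)
qed

lemma qpF_wpath_higher_vderiv_identity:
  fixes H :: "real^'n^'n" and A :: "real^'n^'m" and \<mu> :: real
  assumes smooth: "smooth_on U W" and U: "open U"
    and inv: "\<forall>s\<in>U. qpF H d A b I 0 (W s) = s"
    and on_path: "\<rho> *\<^sub>R nml r + \<mu> *\<^sub>R ehat I \<in> U"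
    and q: "q \<ge> 1"
  defines "\<psi> \<equiv> \<lambda>j. higher_vderiv j (wpath W I \<mu> r)"
  shows "qp_lin H A b I (\<psi> (q + 1) \<rho>) + qp_bil A I (\<psi> 0 \<rho>) (\<psi> (q + 1) \<rho>)
           + qp_bil A I (\<psi> (q + 1) \<rho>) (\<psi> 0 \<rho>)
     = - (\<Sum>i = 1..q. real ((q + 1) choose i) *\<^sub>R qp_bil A I (\<psi> i \<rho>) (\<psi> (q + 1 - i) \<rho>))"
proof -
  define n where "n = nml r"
  define c :: "(real^'n) \<times> (real^'m)" where "c = \<mu> *\<^sub>R ehat I"
  define S where "S = (\<lambda>\<rho>. \<rho> *\<^sub>R n + c) -` U"
  have path: "wpath W I \<mu> r = (\<lambda>\<rho>. W (\<rho> *\<^sub>R n + c))"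
    unfolding wpath_def n_def c_def ..
  have S: "open S" "\<rho> \<in> S"
    unfolding S_def n_def c_def using on_path by (auto intro: continuous_open_vimage[OF U])
  have der: "(\<psi> j has_vector_derivative \<psi> (Suc j) \<rho>) (at \<rho>)" if "\<rho> \<in> S" for j \<rho>
    unfolding \<psi>_def path by (rule smooth_on_line_higher_vderiv[OF smooth U]) (use that S_def in simp)
  have affine: "qp_lin H A b I (\<psi> 0 \<rho>) + qp_bil A I (\<psi> 0 \<rho>) (\<psi> 0 \<rho>)
      = \<rho> *\<^sub>R n + (c - qp_const d b I)" if "\<rho> \<in> S" for \<rho>
  proof -
    have "qpF H d A b I 0 (W (\<rho> *\<^sub>R n + c)) = \<rho> *\<^sub>R n + c"
      using inv that unfolding S_def by simp
    then have "qp_lin H A b I (\<psi> 0 \<rho>) + qp_bil A I (\<psi> 0 \<rho>) (\<psi> 0 \<rho>) = \<rho> *\<^sub>R n + c - qp_const d b I"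
      unfolding \<psi>_def path qpF_quadratic by (intro add_implies_diff) simp
    then show ?thesis by (simp add: add_diff_eq)
  qed
  show ?thesis
    by (rule bilinear_affine_identity_higher_derivatives[where \<psi> = \<psi>, OF bounded_linear_qp_lin
        bounded_bilinear_qp_bil S der affine q])
qed

lemma qpF_frechet_derivative_what:
  fixes H :: "real^'n^'n" and A :: "real^'n^'m" and \<mu> :: real
  assumes smooth: "smooth_on U W" and U: "open U"
    and inv: "\<forall>s\<in>U. qpF H d A b I 0 (W s) = s"
    and v: "qpF H d A b I 0 v \<in> U" "W (qpF H d A b I 0 v) = v"
    and q: "q \<ge> 1"
  defines "wh \<equiv> what W I \<mu> (qpF H d A b I \<mu> v)"
  shows "frechet_derivative (qpF H d A b I \<mu>) (at v) (wh (q + 1))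
     = - (\<Sum>i = 1..q. real ((q + 1) choose i) *\<^sub>R qp_bil A I (wh i) (wh (q + 1 - i)))"
proof -
  define r where "r = qpF H d A b I \<mu> v"
  define a where "a = - norm r"
  define \<psi> where "\<psi> j = higher_vderiv j (wpath W I \<mu> r) (norm r)" for j
  define J where "J h = qp_lin H A b I h + qp_bil A I v h + qp_bil A I h v" for h
  have on_path: "norm r *\<^sub>R nml r + \<mu> *\<^sub>R ehat I = qpF H d A b I 0 v"
    unfolding nml_def r_def by (simp add: qpF_quadratic)
  have "\<psi> 0 = v" unfolding \<psi>_def wpath_def using on_path v(2) by simp
  have wh: "wh j = a ^ j *\<^sub>R \<psi> j" for j
    unfolding wh_def what_def \<psi>_def a_def r_def ..
  have "(qpF H d A b I \<mu> has_derivative J) (at v)"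
    unfolding J_def by (rule qpF_has_derivative)
  then have fd: "frechet_derivative (qpF H d A b I \<mu>) (at v) = J" and "linear J"
    using frechet_derivative_at has_derivative_linear by auto
  have "frechet_derivative (qpF H d A b I \<mu>) (at v) (wh (q + 1)) = a ^ (q + 1) *\<^sub>R J (\<psi> (q + 1))"
    unfolding fd wh by (rule linear_cmul[OF \<open>linear J\<close>])
  also have "J (\<psi> (q + 1))
      = - (\<Sum>i = 1..q. real ((q + 1) choose i) *\<^sub>R qp_bil A I (\<psi> i) (\<psi> (q + 1 - i)))"
    using qpF_wpath_higher_vderiv_identity[OF smooth U inv _ q, of "norm r" r \<mu>] on_path v(1)
    unfolding J_def \<open>\<psi> 0 = v\<close>[symmetric] \<psi>_def by simp
  finally show ?thesis
    using bounded_bilinear_scaleR_power_choose_sum[OF bounded_bilinear_qp_bil, where x = \<psi>]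
    unfolding wh by simp
qed

lemma qpF_right_inverse_eventually_left_inverse:
  fixes W :: "((real^'n) \<times> (real^'m)) \<Rightarrow> ((real^'n) \<times> (real^'m))"
  assumes smooth: "smooth_on U W" and U: "open U" "0 \<in> U"
    and inv: "\<forall>s\<in>U. qpF H d A b I 0 (W s) = s"
  shows "\<forall>\<^sub>F v in nhds (W 0). qpF H d A b I 0 v \<in> U \<and> W (qpF H d A b I 0 v) = v"
proof -
  define F0 where "F0 = qpF H d A b I 0"
  define J where "J h = qp_lin H A b I h + qp_bil A I (W 0) h + qp_bil A I h (W 0)" for h
  have F0_inv: "\<forall>s\<in>U. F0 (W s) = s" using inv unfolding F0_def .
  obtain W' where W': "(W has_derivative W') (at 0)"
    using smooth_on_differentiable[OF smooth U] unfolding differentiable_def by blast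
  have F0': "(F0 has_derivative J) (at (W 0))"
    unfolding F0_def J_def by (rule qpF_has_derivative)
  have "W' (J h) = h" for h
    by (rule derivative_of_right_inverse_inverts[OF W' F0' U F0_inv])
  from quadratic_map_inj_on_ball[OF bounded_linear_qp_lin bounded_bilinear_qp_bil
      has_derivative_bounded_linear[OF W'] this[unfolded J_def], where c = "qp_const d b I"]
  obtain \<eta> where "\<eta> > 0" and inj: "inj_on F0 (ball (W 0) \<eta>)"
    unfolding F0_def qpF_quadratic[abs_def] by auto
  show ?thesis
    using \<open>\<eta> > 0\<close> unfolding F0_def[symmetric]
    by (intro eventually_right_inverse_is_left_inverse[OF U F0_inv _ _ _ _ inj]
        has_derivative_continuous[OF W'] has_derivative_continuous[OF F0']) auto
qed

theorem proposition3:
  fixes H :: "real^'n^'n" and d :: "real^'n"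
    and A :: "real^'n^'m" and b :: "real^'m" and I :: "'m set"
    and xs :: "real^'n" and ls :: "real^'m"
    and W :: "((real^'n) \<times> (real^'m)) \<Rightarrow> ((real^'n) \<times> (real^'m))" and U :: "((real^'n) \<times> (real^'m)) set"
    and \<mu> :: "nat \<Rightarrow> real" and w :: "nat \<Rightarrow> (real^'n) \<times> (real^'m)"
    and \<epsilon> :: "real \<Rightarrow> real" and \<sigma> :: "nat \<Rightarrow> nat"
  assumes H_symm: "transpose H = H"
    \<comment> \<open>KKT point (xs, ls)\<close>
    and KKT_stat: "qp_g H d xs - transpose A *v ls = 0"
    and KKT_ineq: "\<forall>i\<in>I. qp_c A b xs $ i \<ge> 0 \<and> ls $ i \<ge> 0 \<and> qp_c A b xs $ i * ls $ i = 0"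
    and KKT_eq: "\<forall>i\<in>UNIV - I. qp_c A b xs $ i = 0"
    \<comment> \<open>LICQ\<close>
    and LICQ: "independent ((\<lambda>i. A $ i) ` active_set A b I xs)
               \<and> inj_on (\<lambda>i. A $ i) (active_set A b I xs)"
    \<comment> \<open>strict complementarity\<close>
    and SC: "\<forall>i\<in>I. qp_c A b xs $ i = 0 \<longrightarrow> ls $ i > 0"
    \<comment> \<open>strong second-order sufficiency\<close>
    and SSOSC: "\<exists>\<omega>>0. \<forall>p. (\<forall>i\<in>active_set A b I xs. A $ i \<bullet> p = 0)
                       \<longrightarrow> p \<bullet> (H *v p) \<ge> \<omega> * (norm p)\<^sup>2"
    \<comment> \<open>W = w^{w*,0}: the locally unique smooth function near 0 with F^0(W r) = r, W 0 = w*\<close>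
    and U_open: "open U" and U0: "0 \<in> U"
    and W_smooth: "smooth_on U W"
    and W0: "W 0 = (xs, ls)"
    and W_inv: "\<forall>s\<in>U. qpF H d A b I 0 (W s) = s"
    \<comment> \<open>the sequences\<close>
    and mu_pos: "\<forall>k. \<mu> k > 0" and mu_decr: "\<forall>k. \<mu> (Suc k) < \<mu> k"
    and eps_pos: "\<forall>t>0. \<epsilon> t > 0"
    and eps_Theta: "\<epsilon> \<in> \<Theta>[at_right 0](\<lambda>t. t)"
    and w_approx: "\<forall>k. norm (qpF H d A b I (\<mu> k) (w (Suc k))) \<le> \<epsilon> (\<mu> k)"
    \<comment> \<open>subsequence K = range sigma along which w_{k+1} tends to w*\<close>
    and sigma: "strict_mono \<sigma>"
    and w_conv: "(\<lambda>j. w (Suc (\<sigma> j))) \<longlonglongrightarrow> (xs, ls)"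
  shows "\<exists>k0. \<forall>j. \<sigma> j \<ge> k0 \<longrightarrow> (\<forall>q\<ge>1.
     (let k = \<sigma> j;
          r = qpF H d A b I (\<mu> (Suc k)) (w (Suc k));
          wh = what W I (\<mu> (Suc k)) r
      in frechet_derivative (qpF H d A b I (\<mu> (Suc k))) (at (w (Suc k))) (wh (q + 1))
         = - (\<Sum>i = 1..q. real ((q + 1) choose i) *\<^sub>R
                (0, \<chi> l. if l \<in> I then snd (wh (q + 1 - i)) $ l * (A *v fst (wh i)) $ l else 0))))"
proof -
  from eventually_compose_filterlim[OF qpF_right_inverse_eventually_left_inverse[OF W_smooth U_open U0 W_inv]
      w_conv[folded W0]]
  obtain N where N: "\<And>j. j \<ge> N \<Longrightarrow> qpF H d A b I 0 (w (Suc (\<sigma> j))) \<in> U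
      \<and> W (qpF H d A b I 0 (w (Suc (\<sigma> j)))) = w (Suc (\<sigma> j))"
    unfolding eventually_sequentially by blast
  show ?thesis
  proof (intro exI allI impI)
    fix j q :: nat assume "\<sigma> N \<le> \<sigma> j" and q: "1 \<le> q"
    then have "N \<le> j" using strict_mono_less_eq[OF sigma] by blast
    with N have "qpF H d A b I 0 (w (Suc (\<sigma> j))) \<in> U"
      "W (qpF H d A b I 0 (w (Suc (\<sigma> j)))) = w (Suc (\<sigma> j))" by auto
    from qpF_frechet_derivative_what[OF W_smooth U_open W_inv this q, of "\<mu> (Suc (\<sigma> j))"]
    show "let k = \<sigma> j; r = qpF H d A b I (\<mu> (Suc k)) (w (Suc k)); wh = what W I (\<mu> (Suc k)) r
      in frechet_derivative (qpF H d A b I (\<mu> (Suc k))) (at (w (Suc k))) (wh (q + 1))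
         = - (\<Sum>i = 1..q. real ((q + 1) choose i) *\<^sub>R
                (0, \<chi> l. if l \<in> I then snd (wh (q + 1 - i)) $ l * (A *v fst (wh i)) $ l else 0))"
      by (simp only: Let_def qp_bil_def)
  qed
qed

end
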